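(* Consider a population model with two biallelic causal variants (alleles $A_1,A_2$ and $B_1,B_2$) and a biallelic marker (alleles $M_1,M_2$), with ordered genotypes, in which the marker is in linkage disequilibrium with the first causal variant and in linkage equilibrium with the second causal variant. Let $\pi\in(0,1)$ be the probability that a random individual is a case, and let $\pi_{kl}$ be the probability of being a case given ordered genotype $(A_k,A_l)$ at the first causal variant, with $\pi_{12}=\pi_{21}$. Then for all $i,j\in\{1,2\}$, \[ \mathrm{P}(M_i M_j \mid A) \;=\; q_{ij} + D_{11ij}\frac{\pi_{11}-\pi_{12}}{\pi} + D_{22ij}\frac{\pi_{22}-\pi_{12}}{\pi}, \qquad \mathrm{P}(M_i M_j \mid U) \;=\; q_{ij} + D_{11ij}\frac{\pi_{12}-\pi_{11}}{1-\pi} + D_{22ij}\frac{\pi_{12}-\pi_{22}}{1-\pi}, \] where $D_{ijkl}=\mathrm{P}(A_iA_jM_kM_l)-\mathrm{P}(A_iA_j)\mathrm{P}(M_kM_l)$. Moreover, if Hardy–Weinberg equilibrium holds, then also $D_{ijkl}=\mathrm{P}(A_iM_k)\mathrm{P}(A_jM_l)-p_ip_jq_kq_l$.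
   Context: A random individual is drawn from a population. Each individual carries two ordered haplotypes (first and second), and at each of three loci (first causal variant with alleles $A_1,A_2$; second causal variant with alleles $B_1,B_2$; marker with alleles $M_1,M_2$) has an ordered genotype. The individual is either a case (event $A$, affected) or a control (event $U$, unaffected). $\mathrm{P}(A_kA_l)=p_{kl}$ is the probability of ordered genotype $(A_k,A_l)$ at the first causal variant, $\mathrm{P}(M_iM_j)=q_{ij}$ the probability of ordered marker genotype $(M_i,M_j)$, $p_i$ and $q_k$ the population frequencies of alleles $A_i$ and $M_k$, and $\mathrm{P}(A_iA_jM_kM_l)$ the probability that the individual has haplotypes $(A_i,M_k)$ (first) and $(A_j,M_l)$ (second); $\mathrm{P}(A_iM_k)$ denotes the population frequency of the haplotype $(A_i,M_k)$. $\mathrm{P}(M_iM_j\mid A)$ and $\mathrm{P}(M_iM_j\mid U)$ are the probabilities of marker genotype $(M_i,M_j)$ among cases and among controls. The marker is not causal: given the genotypes at the two causal variants, the case/control status is independent of the marker genotype. Linkage equilibrium of the marker with the second causal variant means that, given the genotype at the first causal variant, the marker genotype is independent of the genotype at the second causal variant. Hardy–Weinberg equilibrium means that the two haplotypes of an individual are independent, i.e. $\mathrm{P}(A_iA_jM_kM_l)=\mathrm{P}(A_iM_k)\mathrm{P}(A_jM_l)$ (so in particular $\mathrm{P}(A_iA_j)=p_ip_j$ and $q_{kl}=q_kq_l$). *)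

theory Defs
  imports "HOL-Probability.Probability_Mass_Function"
begin

text \<open>An ordered genotype is a pair (allele on first haplotype, allele on second haplotype);
alleles are indexed 1 and 2.\<close>

type_synonym geno = "nat \<times> nat"
type_synonym indiv = "geno \<times> geno \<times> geno \<times> bool"

definition genos :: "geno set" where
  "genos = {1,2} \<times> {1,2}"

definition gA :: "indiv \<Rightarrow> geno" where "gA w = fst w"
definition gB :: "indiv \<Rightarrow> geno" where "gB w = fst (snd w)"
definition gM :: "indiv \<Rightarrow> geno" where "gM w = fst (snd (snd w))"
definition affected :: "indiv \<Rightarrow> bool" where "affected w = snd (snd (snd w))"

definition Pr :: "indiv pmf \<Rightarrow> indiv set \<Rightarrow> real" where
  "Pr p E = measure_pmf.prob p E"

text \<open>Conditional probability P(E | F) (= 0 by the HOL division convention if P(F) = 0).\<close>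
definition cprob :: "indiv pmf \<Rightarrow> indiv set \<Rightarrow> indiv set \<Rightarrow> real" where
  "cprob p E F = Pr p (E \<inter> F) / Pr p F"

definition evA :: "geno \<Rightarrow> indiv set" where "evA g = {w. gA w = g}"
definition evB :: "geno \<Rightarrow> indiv set" where "evB g = {w. gB w = g}"
definition evM :: "geno \<Rightarrow> indiv set" where "evM g = {w. gM w = g}"
definition Case :: "indiv set" where "Case = {w. affected w}"
definition Ctrl :: "indiv set" where "Ctrl = {w. \<not> affected w}"

definition qG :: "indiv pmf \<Rightarrow> nat \<Rightarrow> nat \<Rightarrow> real" where
  "qG p i j = Pr p (evM (i,j))"
definition pG :: "indiv pmf \<Rightarrow> nat \<Rightarrow> nat \<Rightarrow> real" where
  "pG p i j = Pr p (evA (i,j))"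
definition PAM :: "indiv pmf \<Rightarrow> nat \<Rightarrow> nat \<Rightarrow> nat \<Rightarrow> nat \<Rightarrow> real" where
  "PAM p i j k l = Pr p (evA (i,j) \<inter> evM (k,l))"
definition Dlt :: "indiv pmf \<Rightarrow> nat \<Rightarrow> nat \<Rightarrow> nat \<Rightarrow> nat \<Rightarrow> real" where
  "Dlt p i j k l = PAM p i j k l - pG p i j * qG p k l"

definition piC :: "indiv pmf \<Rightarrow> real" where "piC p = Pr p Case"
definition piG :: "indiv pmf \<Rightarrow> nat \<Rightarrow> nat \<Rightarrow> real" where
  "piG p k l = cprob p Case (evA (k,l))"

definition alleleA :: "indiv pmf \<Rightarrow> nat \<Rightarrow> real" where
  "alleleA p i = (Pr p {w. fst (gA w) = i} + Pr p {w. snd (gA w) = i}) / 2"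
definition alleleM :: "indiv pmf \<Rightarrow> nat \<Rightarrow> real" where
  "alleleM p k = (Pr p {w. fst (gM w) = k} + Pr p {w. snd (gM w) = k}) / 2"
definition hapAM :: "indiv pmf \<Rightarrow> nat \<Rightarrow> nat \<Rightarrow> real" where
  "hapAM p i k = (Pr p {w. fst (gA w) = i \<and> fst (gM w) = k}
                 + Pr p {w. snd (gA w) = i \<and> snd (gM w) = k}) / 2"

text \<open>Hardy-Weinberg equilibrium: the two haplotypes of an individual are independent.\<close>
definition HWE :: "indiv pmf \<Rightarrow> bool" where
  "HWE p \<longleftrightarrow> (\<forall>i\<in>{1,2}. \<forall>j\<in>{1,2}. \<forall>k\<in>{1,2}. \<forall>l\<in>{1,2}.
      PAM p i j k l = hapAM p i k * hapAM p j l)"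

definition marker_noncausal :: "indiv pmf \<Rightarrow> bool" where
  "marker_noncausal p \<longleftrightarrow> (\<forall>a\<in>genos. \<forall>b\<in>genos. \<forall>m\<in>genos.
      cprob p (Case \<inter> evM m) (evA a \<inter> evB b)
        = cprob p Case (evA a \<inter> evB b) * cprob p (evM m) (evA a \<inter> evB b))"

definition LE_marker_B :: "indiv pmf \<Rightarrow> bool" where
  "LE_marker_B p \<longleftrightarrow> (\<forall>a\<in>genos. \<forall>b\<in>genos. \<forall>m\<in>genos.
      cprob p (evM m \<inter> evB b) (evA a)
        = cprob p (evM m) (evA a) * cprob p (evB b) (evA a))"

end

theory Submission
  imports Defs
begin

text \<open>Given the first-variant genotype a, the marker is independent of the second variant
(linkage equilibrium), and given both causal genotypes it is independent of the case status
(the marker is not causal); by the contraction property of conditional independence it is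
then independent of the case status given a alone. Hence P(M_iM_j and case) is the sum over a
of pi_a P(a, M_iM_j), and subtracting q_ij pi leaves the sum of the terms pi_a D_a. The D_a sum
to zero and pi_12 = pi_21, so only the homozygous terms survive, with weights pi_11 - pi_12 and
pi_22 - pi_12; the controls follow by complementation. Under Hardy-Weinberg equilibrium the
genotype frequencies factor into allele frequencies, which gives the second form of D.\<close>

lemma Pr_eq_sum_fibres:
  assumes "finite S" and "f ` set_pmf p \<subseteq> S"
  shows "Pr p E = (\<Sum>s\<in>S. Pr p (E \<inter> {w. f w = s}))"
proof -
  have "Pr p E = Pr p (E \<inter> set_pmf p)"
    unfolding Pr_def by (simp add: measure_Int_set_pmf)
  also have "E \<inter> set_pmf p = (\<Union>s\<in>S. E \<inter> {w. f w = s} \<inter> set_pmf p)"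
    using assms(2) by auto
  also have "Pr p \<dots> = (\<Sum>s\<in>S. Pr p (E \<inter> {w. f w = s} \<inter> set_pmf p))"
    unfolding Pr_def
    by (rule measure_pmf.finite_measure_finite_Union) (auto simp: assms(1) disjoint_family_on_def)
  also have "\<dots> = (\<Sum>s\<in>S. Pr p (E \<inter> {w. f w = s}))"
    unfolding Pr_def by (simp add: measure_Int_set_pmf)
  finally show ?thesis .
qed

lemma Pr_eq_0_if_subset:
  assumes "E \<subseteq> F" and "Pr p F = 0"
  shows "Pr p E = 0"
proof -
  have "Pr p E \<le> Pr p F"
    using assms(1) unfolding Pr_def by (simp add: measure_pmf.finite_measure_mono)
  then show ?thesis
    using assms(2) measure_nonneg[of "measure_pmf p" E] unfolding Pr_def by linarith
qed

lemma Pr_Int_Ctrl: "Pr p (E \<inter> Ctrl) = Pr p E - Pr p (E \<inter> Case)"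
proof -
  have "E \<inter> Ctrl = E - E \<inter> Case" by (auto simp: Case_def Ctrl_def)
  then show ?thesis
    unfolding Pr_def by (simp add: measure_pmf.finite_measure_Diff)
qed

lemma Pr_Int_eq_cprob_mult: "Pr p (E \<inter> F) = cprob p E F * Pr p F"
  by (cases "Pr p F = 0") (auto simp: cprob_def intro: Pr_eq_0_if_subset)

lemma sum_genos: "(\<Sum>g\<in>genos. f g) = f (1,1) + f (1,2) + f (2,1) + f (2,2)"
  unfolding genos_def by (simp add: add.assoc)

lemma finite_genos: "finite genos"
  unfolding genos_def by simp

text \<open>P(X \<inter> Y | Z) = P(X | Z) P(Y | Z), cleared of denominators so that it holds
trivially when P(Z) = 0.\<close>

definition cond_indep :: "indiv pmf \<Rightarrow> indiv set \<Rightarrow> indiv set \<Rightarrow> indiv set \<Rightarrow> bool" where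
  "cond_indep p X Y Z \<longleftrightarrow> Pr p (X \<inter> Y \<inter> Z) * Pr p Z = Pr p (X \<inter> Z) * Pr p (Y \<inter> Z)"

lemma cond_indep_if_cprob:
  assumes "cprob p (X \<inter> Y) Z = cprob p X Z * cprob p Y Z"
  shows "cond_indep p X Y Z"
proof (cases "Pr p Z = 0")
  case True
  have "Pr p (X \<inter> Z) = 0"
    by (rule Pr_eq_0_if_subset[OF _ True]) auto
  with True show ?thesis
    unfolding cond_indep_def by simp
next
  case False
  then show ?thesis
    using assms unfolding cond_indep_def cprob_def by (simp add: field_simps Int_assoc)
qed

lemma cond_indep_Pr_eq:
  assumes "cond_indep p X Y Z"
  shows "Pr p (X \<inter> Y \<inter> Z) = cprob p X Z * Pr p (Y \<inter> Z)"
proof (cases "Pr p Z = 0")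
  case True
  then show ?thesis
    by (simp add: cprob_def Pr_eq_0_if_subset[of _ Z])
next
  case False
  then show ?thesis
    using assms unfolding cond_indep_def cprob_def by (simp add: field_simps)
qed

lemma cond_indep_contraction:
  assumes XY: "cond_indep p X Y (Z \<inter> W)" and YW: "cond_indep p Y W Z"
  shows "cond_indep p (X \<inter> W) Y Z"
proof (cases "Pr p (Z \<inter> W) = 0")
  case True
  have "Pr p (X \<inter> W \<inter> Y \<inter> Z) = 0" "Pr p (X \<inter> W \<inter> Z) = 0"
    by (auto intro: Pr_eq_0_if_subset[OF _ True])
  then show ?thesis
    unfolding cond_indep_def by simp
next
  case False
  have "Pr p (X \<inter> W \<inter> Y \<inter> Z) * Pr p Z * Pr p (Z \<inter> W)
      = Pr p (X \<inter> Z \<inter> W) * (Pr p (Y \<inter> W \<inter> Z) * Pr p Z)"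
    using XY unfolding cond_indep_def by (simp add: Int_ac)
  also have "\<dots> = Pr p (X \<inter> W \<inter> Z) * Pr p (Y \<inter> Z) * Pr p (Z \<inter> W)"
    using YW unfolding cond_indep_def by (simp add: Int_ac)
  finally show ?thesis
    using False unfolding cond_indep_def by simp
qed

lemma cond_indep_sum_fibres:
  assumes "finite S" and "f ` set_pmf p \<subseteq> S"
    and fibres: "\<And>s. s \<in> S \<Longrightarrow> cond_indep p (X \<inter> {w. f w = s}) Y Z"
  shows "cond_indep p X Y Z"
proof -
  have "Pr p (X \<inter> Y \<inter> Z) * Pr p Z = (\<Sum>s\<in>S. Pr p (X \<inter> {w. f w = s} \<inter> Y \<inter> Z) * Pr p Z)"
    using Pr_eq_sum_fibres[OF assms(1,2), of "X \<inter> Y \<inter> Z"]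
    by (simp add: sum_distrib_right Int_ac)
  also have "\<dots> = (\<Sum>s\<in>S. Pr p (X \<inter> {w. f w = s} \<inter> Z)) * Pr p (Y \<inter> Z)"
    using fibres unfolding cond_indep_def by (simp add: sum_distrib_right)
  also have "(\<Sum>s\<in>S. Pr p (X \<inter> {w. f w = s} \<inter> Z)) = Pr p (X \<inter> Z)"
    using Pr_eq_sum_fibres[OF assms(1,2), of "X \<inter> Z"] by (simp add: Int_ac)
  finally show ?thesis
    unfolding cond_indep_def .
qed

lemma cond_indep_Case_evM_evA:
  assumes "gB ` set_pmf p \<subseteq> genos" and "marker_noncausal p" and "LE_marker_B p"
    and "a \<in> genos" and "m \<in> genos"
  shows "cond_indep p Case (evM m) (evA a)"
proof (rule cond_indep_sum_fibres[OF finite_genos assms(1)])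
  fix b assume "b \<in> genos"
  then have "cond_indep p Case (evM m) (evA a \<inter> evB b)" "cond_indep p (evM m) (evB b) (evA a)"
    using assms(2-5) unfolding marker_noncausal_def LE_marker_B_def
    by (auto intro: cond_indep_if_cprob)
  from cond_indep_contraction[OF this]
  show "cond_indep p (Case \<inter> {w. gB w = b}) (evM m) (evA a)"
    by (simp add: evB_def)
qed

lemma Pr_evM_Case_eq_sum:
  assumes "gA ` set_pmf p \<subseteq> genos" "gB ` set_pmf p \<subseteq> genos"
    and "marker_noncausal p" and "LE_marker_B p" and "m \<in> genos"
  shows "Pr p (evM m \<inter> Case) = (\<Sum>(k,l)\<in>genos. piG p k l * PAM p k l (fst m) (snd m))"
proof -
  have "Pr p (evM m \<inter> Case) = (\<Sum>a\<in>genos. Pr p (Case \<inter> evM m \<inter> evA a))"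
    using Pr_eq_sum_fibres[OF finite_genos assms(1), of "evM m \<inter> Case"]
    by (simp add: evA_def Int_ac)
  also have "\<dots> = (\<Sum>a\<in>genos. cprob p Case (evA a) * Pr p (evM m \<inter> evA a))"
    using cond_indep_Case_evM_evA[OF assms(2-4) _ assms(5)] by (simp add: cond_indep_Pr_eq)
  finally show ?thesis
    by (simp add: case_prod_beta piG_def PAM_def Int_commute)
qed

lemma piC_eq_sum:
  assumes "gA ` set_pmf p \<subseteq> genos"
  shows "piC p = (\<Sum>(k,l)\<in>genos. piG p k l * pG p k l)"
  using Pr_eq_sum_fibres[OF finite_genos assms, of Case]
  by (simp add: piC_def piG_def pG_def case_prod_beta evA_def[symmetric] Pr_Int_eq_cprob_mult)

lemma sum_pG_eq_1:
  assumes "gA ` set_pmf p \<subseteq> genos"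
  shows "(\<Sum>(k,l)\<in>genos. pG p k l) = 1"
  using Pr_eq_sum_fibres[OF finite_genos assms, of UNIV]
  by (simp add: pG_def case_prod_beta evA_def[symmetric] Pr_def)

lemma qG_eq_sum_PAM:
  assumes "gA ` set_pmf p \<subseteq> genos"
  shows "qG p i j = (\<Sum>(k,l)\<in>genos. PAM p k l i j)"
  using Pr_eq_sum_fibres[OF finite_genos assms, of "evM (i,j)"]
  by (simp add: qG_def PAM_def case_prod_beta evA_def[symmetric] Int_commute)

lemma sum_Dlt_eq_0:
  assumes "gA ` set_pmf p \<subseteq> genos"
  shows "(\<Sum>(k,l)\<in>genos. Dlt p k l i j) = 0"
proof -
  have "(\<Sum>(k,l)\<in>genos. Dlt p k l i j)
      = (\<Sum>(k,l)\<in>genos. PAM p k l i j) - (\<Sum>(k,l)\<in>genos. pG p k l) * qG p i j"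
    by (simp add: Dlt_def case_prod_beta sum_subtractf sum_distrib_right)
  then show ?thesis
    by (simp add: qG_eq_sum_PAM[OF assms, symmetric] sum_pG_eq_1[OF assms])
qed

lemma Pr_evM_Case:
  assumes "gA ` set_pmf p \<subseteq> genos" "gB ` set_pmf p \<subseteq> genos"
    and "marker_noncausal p" and "LE_marker_B p" and "(i,j) \<in> genos"
    and sym: "piG p 1 2 = piG p 2 1"
  shows "Pr p (evM (i,j) \<inter> Case)
    = qG p i j * piC p + Dlt p 1 1 i j * (piG p 1 1 - piG p 1 2)
                       + Dlt p 2 2 i j * (piG p 2 2 - piG p 1 2)"
proof -
  have "(\<Sum>(k,l)\<in>genos. piG p k l * Dlt p k l i j)
      = (\<Sum>(k,l)\<in>genos. piG p k l * PAM p k l i j)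
        - (\<Sum>(k,l)\<in>genos. piG p k l * pG p k l) * qG p i j"
    by (simp add: Dlt_def case_prod_beta right_diff_distrib sum_subtractf sum_distrib_right
        mult.assoc)
  then have "Pr p (evM (i,j) \<inter> Case) - qG p i j * piC p
      = (\<Sum>(k,l)\<in>genos. piG p k l * Dlt p k l i j)"
    using Pr_evM_Case_eq_sum[OF assms(1-5)] piC_eq_sum[OF assms(1)] by simp
  also have "\<dots> = (\<Sum>(k,l)\<in>genos. (piG p k l - piG p 1 2) * Dlt p k l i j)
                  + piG p 1 2 * (\<Sum>(k,l)\<in>genos. Dlt p k l i j)"
    by (simp add: case_prod_beta left_diff_distrib sum_subtractf sum_distrib_left)
  also have "\<dots> = (\<Sum>(k,l)\<in>genos. (piG p k l - piG p 1 2) * Dlt p k l i j)"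
    by (simp add: sum_Dlt_eq_0[OF assms(1)])
  also have "\<dots> = Dlt p 1 1 i j * (piG p 1 1 - piG p 1 2) + Dlt p 2 2 i j * (piG p 2 2 - piG p 1 2)"
    using sym by (simp add: sum_genos)
  finally show ?thesis
    by simp
qed

lemma Pr_Ctrl: "Pr p Ctrl = 1 - piC p"
  using Pr_Int_Ctrl[of p UNIV] by (simp add: Pr_def piC_def)

lemma cprob_evM_Case:
  assumes "gA ` set_pmf p \<subseteq> genos" "gB ` set_pmf p \<subseteq> genos"
    and "marker_noncausal p" and "LE_marker_B p" and "(i,j) \<in> genos"
    and "piG p 1 2 = piG p 2 1" and "piC p \<noteq> 0"
  shows "cprob p (evM (i,j)) Case
    = qG p i j + Dlt p 1 1 i j * (piG p 1 1 - piG p 1 2) / piC p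
               + Dlt p 2 2 i j * (piG p 2 2 - piG p 1 2) / piC p"
  using assms(7)
  by (simp add: cprob_def piC_def[symmetric] Pr_evM_Case[OF assms(1-6)] add_divide_distrib)

lemma cprob_evM_Ctrl:
  assumes "gA ` set_pmf p \<subseteq> genos" "gB ` set_pmf p \<subseteq> genos"
    and "marker_noncausal p" and "LE_marker_B p" and "(i,j) \<in> genos"
    and "piG p 1 2 = piG p 2 1" and "piC p \<noteq> 1"
  shows "cprob p (evM (i,j)) Ctrl
    = qG p i j + Dlt p 1 1 i j * (piG p 1 2 - piG p 1 1) / (1 - piC p)
               + Dlt p 2 2 i j * (piG p 1 2 - piG p 2 2) / (1 - piC p)"
proof -
  have "Pr p (evM (i,j) \<inter> Ctrl) = qG p i j * (1 - piC p)
      + Dlt p 1 1 i j * (piG p 1 2 - piG p 1 1) + Dlt p 2 2 i j * (piG p 1 2 - piG p 2 2)"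
    by (simp add: Pr_Int_Ctrl Pr_evM_Case[OF assms(1-6)] qG_def algebra_simps)
  then show ?thesis
    using assms(7) by (simp add: cprob_def Pr_Ctrl add_divide_distrib)
qed

lemma Pr_eq_sum_biallelic:
  fixes f :: "indiv \<Rightarrow> nat"
  assumes "f ` set_pmf p \<subseteq> {1,2}"
  shows "Pr p E = Pr p (E \<inter> {w. f w = 1}) + Pr p (E \<inter> {w. f w = 2})"
  using Pr_eq_sum_fibres[OF _ assms, of E] by simp

lemma alleleA_eq_sum_hapAM:
  assumes "gM ` set_pmf p \<subseteq> genos"
  shows "alleleA p i = hapAM p i 1 + hapAM p i 2"
proof -
  have fst: "(fst \<circ> gM) ` set_pmf p \<subseteq> {1,2}" and snd: "(snd \<circ> gM) ` set_pmf p \<subseteq> {1,2}"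
    using assms by (auto simp: genos_def)
  from Pr_eq_sum_biallelic[OF fst, of "{w. fst (gA w) = i}"]
    Pr_eq_sum_biallelic[OF snd, of "{w. snd (gA w) = i}"]
  show ?thesis
    unfolding alleleA_def hapAM_def by (simp add: Collect_conj_eq field_simps)
qed

lemma alleleM_eq_sum_hapAM:
  assumes "gA ` set_pmf p \<subseteq> genos"
  shows "alleleM p k = hapAM p 1 k + hapAM p 2 k"
proof -
  have fst: "(fst \<circ> gA) ` set_pmf p \<subseteq> {1,2}" and snd: "(snd \<circ> gA) ` set_pmf p \<subseteq> {1,2}"
    using assms by (auto simp: genos_def)
  from Pr_eq_sum_biallelic[OF fst, of "{w. fst (gM w) = k}"]
    Pr_eq_sum_biallelic[OF snd, of "{w. snd (gM w) = k}"]
  show ?thesis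
    unfolding alleleM_def hapAM_def by (simp add: Collect_conj_eq Int_commute field_simps)
qed

lemma pG_eq_sum_PAM:
  assumes "gM ` set_pmf p \<subseteq> genos"
  shows "pG p i j = (\<Sum>(k,l)\<in>genos. PAM p i j k l)"
  using Pr_eq_sum_fibres[OF finite_genos assms, of "evA (i,j)"]
  by (simp add: pG_def PAM_def case_prod_beta evM_def[symmetric])

lemma Dlt_HWE:
  assumes "gA ` set_pmf p \<subseteq> genos" "gM ` set_pmf p \<subseteq> genos" and "HWE p"
    and "i \<in> {1,2}" "j \<in> {1,2}" "k \<in> {1,2}" "l \<in> {1,2}"
  shows "Dlt p i j k l = hapAM p i k * hapAM p j l
                         - alleleA p i * alleleA p j * alleleM p k * alleleM p l"
proof -
  have PAM: "PAM p a b c d = hapAM p a c * hapAM p b d"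
    if "a \<in> {1,2}" "b \<in> {1,2}" "c \<in> {1,2}" "d \<in> {1,2}" for a b c d
    using assms(3) that unfolding HWE_def by blast
  have "pG p i j = alleleA p i * alleleA p j"
    using assms(4,5) by (simp add: pG_eq_sum_PAM[OF assms(2)] alleleA_eq_sum_hapAM[OF assms(2)]
        sum_genos PAM algebra_simps)
  moreover have "qG p k l = alleleM p k * alleleM p l"
    using assms(6,7) by (simp add: qG_eq_sum_PAM[OF assms(1)] alleleM_eq_sum_hapAM[OF assms(1)]
        sum_genos PAM algebra_simps)
  ultimately show ?thesis
    using assms(4-7) by (simp add: Dlt_def PAM)
qed

theorem lemma1:
  fixes p :: "indiv pmf"
  assumes biallelic: "set_pmf p \<subseteq> genos \<times> genos \<times> genos \<times> UNIV"
    and noncausal: "marker_noncausal p"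
    and LE: "LE_marker_B p"
    and pi_pos: "0 < piC p" and pi_lt1: "piC p < 1"
    and sym: "piG p 1 2 = piG p 2 1"
  shows "(\<forall>i\<in>{1,2}. \<forall>j\<in>{1,2}.
            cprob p (evM (i,j)) Case
              = qG p i j + Dlt p 1 1 i j * (piG p 1 1 - piG p 1 2) / piC p
                         + Dlt p 2 2 i j * (piG p 2 2 - piG p 1 2) / piC p
          \<and> cprob p (evM (i,j)) Ctrl
              = qG p i j + Dlt p 1 1 i j * (piG p 1 2 - piG p 1 1) / (1 - piC p)
                         + Dlt p 2 2 i j * (piG p 1 2 - piG p 2 2) / (1 - piC p))
       \<and> (HWE p \<longrightarrow> (\<forall>i\<in>{1,2}. \<forall>j\<in>{1,2}. \<forall>k\<in>{1,2}. \<forall>l\<in>{1,2}.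
            Dlt p i j k l = hapAM p i k * hapAM p j l
                            - alleleA p i * alleleA p j * alleleM p k * alleleM p l))"
proof -
  have supp: "gA ` set_pmf p \<subseteq> genos" "gB ` set_pmf p \<subseteq> genos" "gM ` set_pmf p \<subseteq> genos"
    using biallelic by (auto simp: gA_def gB_def gM_def)
  have "(i,j) \<in> genos" if "i \<in> {1,2}" "j \<in> {1,2}" for i j
    using that by (auto simp: genos_def)
  moreover have "piC p \<noteq> 0" "piC p \<noteq> 1"
    using pi_pos pi_lt1 by auto
  ultimately show ?thesis
    using cprob_evM_Case[OF supp(1,2) noncausal LE _ sym]
      cprob_evM_Ctrl[OF supp(1,2) noncausal LE _ sym] Dlt_HWE[OF supp(1,3)]
    by simp
qed

end
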